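(* Let $0<q<1$, let $\pi=\pi_+\oplus\pi_-$ be the spin representation of $\mathcal{A}(S^2_q)$ on $\mathcal{H}=\mathcal{H}_+\oplus\mathcal{H}_-$, and let $D|l,m\rangle_\pm=(l+\tfrac12)|l,m\rangle_\mp$. Let $B$ be the $*$-algebra generated by $\pi(\mathcal{A}(S^2_q))$ and the commutators $[D,\pi(x)]$, $x\in\mathcal{A}(S^2_q)$. Then $B\subset\mathcal{B}(\mathcal{H})$ (all these commutators are bounded), and $(\mathcal{A}(S^2_q),\mathcal{H},D)$ is a regular spectral triple of metric dimension $2$.
   Context: $\mathcal{A}(S^2_q)$ is the unital $*$-algebra generated by $a,a^*$ and $b=b^*$ with relations $ba=q^2ab$, $a^*a+b^2=1$, $q^4aa^*+b^2=q^4$. $\mathcal{H}_\pm$ each have orthonormal basis $|l,m\rangle_\pm$, $l\in\mathbb{N}+\tfrac12$, $m=-l,-l+1,\dots,l$ (vectors with indices out of range are $0$). With $[x]=(q^x-q^{-x})/(q-q^{-1})$: $\pi_\pm(a)|l,m\rangle_\pm=q^{m-l-\frac12}\frac{\sqrt{[l+m+1][l+m+2]}}{[2l+2]}|l+1,m+1\rangle_\pm-q^{m+l+\frac12}\frac{\sqrt{[l-m-1][l-m]}}{[2l]}|l-1,m+1\rangle_\pm\pm\frac{(1+q^2)q^{m-\frac12}}{[2l][2l+2]}\sqrt{[l+m+1][l-m]}\,|l,m+1\rangle_\pm$, $\pi_\pm(b)|l,m\rangle_\pm=-q^{m+1}\frac{\sqrt{[l+m+1][l-m+1]}}{[2l+2]}|l+1,m\rangle_\pm-q^{m+1}\frac{\sqrt{[l+m][l-m]}}{[2l]}|l-1,m\rangle_\pm\pm\frac{[l-m+1][l+m]-q^2[l-m][l+m+1]}{[2l][2l+2]}|l,m\rangle_\pm$;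 these extend to bounded $*$-representations. A spectral triple is regular if $A\cup[D,A]\subset\bigcap_j\mathrm{dom}\,\delta^j$, $\delta(T)=[|D|,T]$. Metric dimension $d$ means the singular values of $|D|^{-1}$ are of order $n^{-1/d}$ as $n\to\infty$. *)

theory Defs
  imports "HOL-Analysis.Analysis"
begin

text \<open>Basis index (s, l, m) of H = H_+ (+) H_-: s = True means H_+, s = False means H_-.
  Only valid indices (l in N + 1/2, m in {-l, -l+1, ..., l}) correspond to basis vectors;
  all other indices denote the zero vector.\<close>

type_synonym idx = "bool \<times> real \<times> real"
type_synonym mat = "idx \<Rightarrow> idx \<Rightarrow> complex"
type_synonym vec = "idx \<Rightarrow> complex"

definition valid :: "idx \<Rightarrow> bool" where
  "valid i = (case i of (s, l, m) \<Rightarrow>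
     (\<exists>n::nat. l = real n + 1/2) \<and> (\<exists>k::int. m = l - of_int k) \<and> - l \<le> m \<and> m \<le> l)"

definition qnum :: "real \<Rightarrow> real \<Rightarrow> real" where
  "qnum q x = (q powr x - q powr (- x)) / (q - 1 / q)"

definition sgnb :: "bool \<Rightarrow> real" where
  "sgnb s = (if s then 1 else -1)"

text \<open>Matrix coefficients: M i j is the coefficient of basis vector i in M applied to basis vector j.\<close>

definition piA :: "real \<Rightarrow> mat" where
  "piA q i j = (case i of (s', l', m') \<Rightarrow> case j of (s, l, m) \<Rightarrow>
     if valid i \<and> valid j \<and> s' = s then complex_of_real
       (if l' = l + 1 \<and> m' = m + 1 then
          q powr (m - l - 1/2) * sqrt (qnum q (l + m + 1) * qnum q (l + m + 2)) / qnum q (2*l + 2)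
        else if l' = l - 1 \<and> m' = m + 1 then
          - (q powr (m + l + 1/2) * sqrt (qnum q (l - m - 1) * qnum q (l - m)) / qnum q (2*l))
        else if l' = l \<and> m' = m + 1 then
          sgnb s * ((1 + q^2) * q powr (m - 1/2) / (qnum q (2*l) * qnum q (2*l + 2)))
            * sqrt (qnum q (l + m + 1) * qnum q (l - m))
        else 0)
     else 0)"

definition piB :: "real \<Rightarrow> mat" where
  "piB q i j = (case i of (s', l', m') \<Rightarrow> case j of (s, l, m) \<Rightarrow>
     if valid i \<and> valid j \<and> s' = s \<and> m' = m then complex_of_real
       (if l' = l + 1 then
          - (q powr (m + 1) * sqrt (qnum q (l + m + 1) * qnum q (l - m + 1)) / qnum q (2*l + 2))
        else if l' = l - 1 then
          - (q powr (m + 1) * sqrt (qnum q (l + m) * qnum q (l - m)) / qnum q (2*l))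
        else if l' = l then
          sgnb s * ((qnum q (l - m + 1) * qnum q (l + m) - q^2 * qnum q (l - m) * qnum q (l + m + 1))
            / (qnum q (2*l) * qnum q (2*l + 2)))
        else 0)
     else 0)"

definition Dmat :: mat where
  "Dmat i j = (case i of (s', l', m') \<Rightarrow> case j of (s, l, m) \<Rightarrow>
     if valid i \<and> valid j \<and> l' = l \<and> m' = m \<and> s' \<noteq> s then complex_of_real (l + 1/2) else 0)"

definition absDmat :: mat where
  "absDmat i j = (case j of (s, l, m) \<Rightarrow>
     if valid j \<and> i = j then complex_of_real (l + 1/2) else 0)"

definition mmult :: "mat \<Rightarrow> mat \<Rightarrow> mat" where
  "mmult A B i k = (\<Sum>\<^sub>\<infinity>j. A i j * B j k)"

definition madd :: "mat \<Rightarrow> mat \<Rightarrow> mat" where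
  "madd A B i k = A i k + B i k"

definition msmult :: "complex \<Rightarrow> mat \<Rightarrow> mat" where
  "msmult c A i k = c * A i k"

definition madj :: "mat \<Rightarrow> mat" where
  "madj A i k = cnj (A k i)"

definition mone :: mat where
  "mone i k = (if i = k \<and> valid i then 1 else 0)"

definition mcomm :: "mat \<Rightarrow> mat \<Rightarrow> mat" where
  "mcomm A B i k = mmult A B i k - mmult B A i k"

inductive_set alg_gen :: "mat set \<Rightarrow> mat set" for G :: "mat set" where
  gen: "T \<in> G \<Longrightarrow> T \<in> alg_gen G"
| one: "mone \<in> alg_gen G"
| add: "S \<in> alg_gen G \<Longrightarrow> T \<in> alg_gen G \<Longrightarrow> madd S T \<in> alg_gen G"
| smult: "T \<in> alg_gen G \<Longrightarrow> msmult c T \<in> alg_gen G"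
| mult: "S \<in> alg_gen G \<Longrightarrow> T \<in> alg_gen G \<Longrightarrow> mmult S T \<in> alg_gen G"

definition star_alg_gen :: "mat set \<Rightarrow> mat set" where
  "star_alg_gen G = alg_gen (G \<union> madj ` G)"

definition piAlg :: "real \<Rightarrow> mat set" where
  "piAlg q = alg_gen {piA q, madj (piA q), piB q}"

definition commD :: "real \<Rightarrow> mat set" where
  "commD q = {mcomm Dmat T | T. T \<in> piAlg q}"

definition Balg :: "real \<Rightarrow> mat set" where
  "Balg q = star_alg_gen (piAlg q \<union> commD q)"

definition finsupp_vec :: "vec \<Rightarrow> bool" where
  "finsupp_vec v = (finite {i. v i \<noteq> 0} \<and> (\<forall>i. v i \<noteq> 0 \<longrightarrow> valid i))"

definition mapply :: "mat \<Rightarrow> vec \<Rightarrow> vec" where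
  "mapply M v i = (\<Sum>\<^sub>\<infinity>j. M i j * v j)"

definition vnorm2 :: "vec \<Rightarrow> real" where
  "vnorm2 v = (\<Sum>\<^sub>\<infinity>i. (cmod (v i))^2)"

text \<open>The operator defined by M on the dense subspace of finitely supported vectors is
  bounded (hence extends to a bounded operator on H).\<close>
definition mbounded :: "mat \<Rightarrow> bool" where
  "mbounded M = (\<exists>C. \<forall>v. finsupp_vec v \<longrightarrow>
      (\<lambda>i. (cmod (mapply M v i))^2) summable_on UNIV \<and> vnorm2 (mapply M v) \<le> C * vnorm2 v)"

definition hermitian :: "mat \<Rightarrow> bool" where
  "hermitian M = (\<forall>i j. M i j = cnj (M j i))"

definition delta :: "mat \<Rightarrow> mat" where
  "delta T = mcomm absDmat T"

definition in_dom_delta_pow :: "nat \<Rightarrow> mat \<Rightarrow> bool" where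
  "in_dom_delta_pow j T = (\<forall>i\<le>j. mbounded ((delta ^^ i) T))"

text \<open>Singular values of |D|^{-1}: |D|^{-1} is diagonal with positive entries 1/(l+1/2),
  so its n-th singular value (n = 0,1,2,...) is the n-th term of the decreasing rearrangement
  (with multiplicity) of the diagonal entries.\<close>
definition invabsD_diag :: "idx \<Rightarrow> real" where
  "invabsD_diag i = 1 / (fst (snd i) + 1/2)"

definition sing_val_invabsD :: "nat \<Rightarrow> real" where
  "sing_val_invabsD n = Inf {t. 0 \<le> t \<and> finite {i. valid i \<and> invabsD_diag i > t}
                                   \<and> card {i. valid i \<and> invabsD_diag i > t} \<le> n}"

definition spectral_triple :: "real \<Rightarrow> bool" where
  "spectral_triple q =
     ((\<forall>T\<in>piAlg q. mbounded T)
      \<and> hermitian Dmat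
      \<and> sing_val_invabsD \<longlonglongrightarrow> 0
      \<and> (\<forall>T\<in>piAlg q. mbounded (mcomm Dmat T)))"

definition regular :: "real \<Rightarrow> bool" where
  "regular q = (\<forall>T \<in> piAlg q \<union> commD q. \<forall>j. in_dom_delta_pow j T)"

definition metric_dimension :: "real \<Rightarrow> bool" where
  "metric_dimension d = (\<exists>c C. 0 < c \<and> 0 < C \<and> (\<forall>n::nat. n \<ge> 1 \<longrightarrow>
       c * real n powr (- 1 / d) \<le> sing_val_invabsD n \<and> sing_val_invabsD n \<le> C * real n powr (- 1 / d)))"

end

theory Submission
  imports Defs
begin

text \<open>The generators \<open>\<pi>(a)\<close>, \<open>\<pi>(a\<^sup>*)\<close>, \<open>\<pi>(b)\<close> change \<open>l\<close> and \<open>m\<close> by at most one and have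
  uniformly bounded matrix entries. Matrices with these two properties form a \<open>*\<close>-algebra of
  bounded operators (Schur test), and \<open>\<delta> = [|D|, \<cdot>]\<close> multiplies the entry at \<open>(l', l)\<close> by
  \<open>l' - l\<close>, so it preserves this algebra; this gives boundedness and regularity.
  Writing a generator as \<open>g \<plusminus> h\<close> on \<open>H\<^sub>\<plusminus>\<close>, its commutator with \<open>D\<close> has entries
  \<open>(l' - l) g \<plusminus> (2l + 1) h\<close>, and the part \<open>h\<close>, which is diagonal in \<open>l\<close>, decays like \<open>q\<^bsup>2l\<^esup>\<close>;
  by the Leibniz rule the commutators \<open>[D, \<pi>(x)]\<close> are then again banded with bounded entries.
  Finally, \<open>2N(N + 1)\<close> basis vectors satisfy \<open>l + 1/2 \<le> N\<close>, so the \<open>n\<close>-th singular value of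
  \<open>|D|\<^sup>-\<^sup>1\<close> lies between \<open>1/(4\<surd>n)\<close> and \<open>2/\<surd>n\<close>.\<close>

abbreviation idx_l :: "idx \<Rightarrow> real" where "idx_l i \<equiv> fst (snd i)"
abbreviation idx_m :: "idx \<Rightarrow> real" where "idx_m i \<equiv> snd (snd i)"

lemma infsum_eq_sum_superset:
  fixes f :: "'a \<Rightarrow> 'b::{comm_monoid_add, t2_space}"
  assumes "finite F" "\<And>x. x \<notin> F \<Longrightarrow> f x = 0"
  shows "infsum f UNIV = sum f F"
proof -
  have "infsum f UNIV = infsum f F"
    by (rule infsum_cong_neutral) (use assms in auto)
  then show ?thesis using assms(1) by simp
qed

lemma summable_on_finite_support:
  fixes f :: "'a \<Rightarrow> 'b::{comm_monoid_add, topological_space}"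
  assumes "finite F" "\<And>x. x \<notin> F \<Longrightarrow> f x = 0"
  shows "f summable_on UNIV"
proof -
  have "f summable_on UNIV \<longleftrightarrow> f summable_on F"
    by (rule summable_on_cong_neutral) (use assms in auto)
  then show ?thesis using assms(1) by simp
qed

lemma valid_iff:
  "valid (s, l, m) \<longleftrightarrow> (\<exists>n::nat. l = real n + 1/2) \<and> (\<exists>k::int. m = l - of_int k) \<and> - l \<le> m \<and> m \<le> l"
  unfolding valid_def by simp

lemma valid_bounds: "valid i \<Longrightarrow> 1/2 \<le> idx_l i \<and> - idx_l i \<le> idx_m i \<and> idx_m i \<le> idx_l i"
  unfolding valid_def by (auto split: prod.splits)

lemma valid_offsets_int:
  assumes "valid i" "valid k"
  obtains a b :: int where "idx_l k = idx_l i + of_int a" "idx_m k = idx_m i + of_int b"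
proof -
  obtain n1 n2 :: nat and k1 k2 :: int
    where "idx_l i = real n1 + 1/2" "idx_m i = idx_l i - of_int k1"
      and "idx_l k = real n2 + 1/2" "idx_m k = idx_l k - of_int k2"
    using assms unfolding valid_def by (auto split: prod.splits)
  then show ?thesis
    by (intro that[of "int n2 - int n1" "int n2 - int n1 - k2 + k1"]) simp_all
qed

section \<open>Banded matrices with bounded entries\<close>

definition banded :: "real \<Rightarrow> mat \<Rightarrow> bool" where
  "banded L M \<longleftrightarrow> (\<forall>i k. M i k \<noteq> 0 \<longrightarrow>
     valid i \<and> valid k \<and> \<bar>idx_l i - idx_l k\<bar> \<le> L \<and> \<bar>idx_m i - idx_m k\<bar> \<le> L)"

definition entries_bounded :: "real \<Rightarrow> mat \<Rightarrow> bool" where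
  "entries_bounded C M \<longleftrightarrow> (\<forall>i k. cmod (M i k) \<le> C)"

definition banded_bounded :: "mat \<Rightarrow> bool" where
  "banded_bounded M \<longleftrightarrow> (\<exists>L C. banded L M \<and> entries_bounded C M)"

definition offset_box :: "real \<Rightarrow> (bool \<times> int \<times> int) set" where
  "offset_box L = UNIV \<times> {-\<lceil>L\<rceil>..\<lceil>L\<rceil>} \<times> {-\<lceil>L\<rceil>..\<lceil>L\<rceil>}"

definition band_nbhd :: "real \<Rightarrow> idx \<Rightarrow> idx set" where
  "band_nbhd L i = (\<lambda>(s, a, b). (s, idx_l i + of_int a, idx_m i + of_int b)) ` offset_box L"

lemma finite_offset_box: "finite (offset_box L)"
  unfolding offset_box_def by simp

lemma finite_band_nbhd: "finite (band_nbhd L i)"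
  unfolding band_nbhd_def using finite_offset_box by simp

lemma card_band_nbhd_le: "card (band_nbhd L i) \<le> card (offset_box L)"
  unfolding band_nbhd_def using card_image_le finite_offset_box by blast

lemma mem_band_nbhd:
  assumes "valid i" "valid k" "\<bar>idx_l i - idx_l k\<bar> \<le> L" "\<bar>idx_m i - idx_m k\<bar> \<le> L"
  shows "k \<in> band_nbhd L i"
proof -
  obtain a b :: int where ab: "idx_l k = idx_l i + of_int a" "idx_m k = idx_m i + of_int b"
    using valid_offsets_int[OF assms(1,2)] .
  have "\<bar>a\<bar> \<le> \<lceil>L\<rceil>" "\<bar>b\<bar> \<le> \<lceil>L\<rceil>"
    using ab assms(3,4) by (simp_all add: le_ceiling_iff)
  then have "(fst k, a, b) \<in> offset_box L" unfolding offset_box_def by auto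
  moreover have "k = (fst k, idx_l i + of_int a, idx_m i + of_int b)"
    using ab by (cases k) auto
  ultimately show ?thesis unfolding band_nbhd_def by force
qed

lemma band_nbhd_sym:
  assumes "j \<in> band_nbhd L i"
  shows "i \<in> band_nbhd L j"
proof -
  obtain s a b where sab: "(s, a, b) \<in> offset_box L" "j = (s, idx_l i + of_int a, idx_m i + of_int b)"
    using assms unfolding band_nbhd_def by auto
  have "(fst i, -a, -b) \<in> offset_box L"
    using sab(1) unfolding offset_box_def by auto
  moreover have "i = (fst i, idx_l j + of_int (-a), idx_m j + of_int (-b))"
    using sab(2) by (cases i) auto
  ultimately show ?thesis unfolding band_nbhd_def by force
qed

lemma banded_nonzero:
  "banded L M \<Longrightarrow> M i k \<noteq> 0 \<Longrightarrow>
     valid i \<and> valid k \<and> \<bar>idx_l i - idx_l k\<bar> \<le> L \<and> \<bar>idx_m i - idx_m k\<bar> \<le> L"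
  unfolding banded_def by blast

lemma banded_row: "banded L M \<Longrightarrow> M i j \<noteq> 0 \<Longrightarrow> j \<in> band_nbhd L i"
  using banded_nonzero mem_band_nbhd by blast

lemma entries_boundedD: "entries_bounded C M \<Longrightarrow> cmod (M i k) \<le> C"
  unfolding entries_bounded_def by blast

lemma entries_bounded_nonneg: "entries_bounded C M \<Longrightarrow> 0 \<le> C"
  unfolding entries_bounded_def by (meson norm_ge_zero order_trans)

lemma mmult_eq_sum_superset:
  assumes "banded L M" "finite F" "band_nbhd L i \<subseteq> F"
  shows "mmult M N i k = (\<Sum>j\<in>F. M i j * N j k)"
  unfolding mmult_def
  by (rule infsum_eq_sum_superset[OF assms(2)]) (use assms(1,3) banded_row in fastforce)

lemma banded_mmult:
  assumes "banded L1 M" "banded L2 N"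
  shows "banded (L1 + L2) (mmult M N)"
  unfolding banded_def
proof (intro allI impI)
  fix i k assume "mmult M N i k \<noteq> 0"
  then have "(\<Sum>j\<in>band_nbhd L1 i. M i j * N j k) \<noteq> 0"
    by (simp add: mmult_eq_sum_superset[OF assms(1) finite_band_nbhd order_refl])
  then obtain j where "M i j * N j k \<noteq> 0" by (meson sum.neutral)
  then have "M i j \<noteq> 0" "N j k \<noteq> 0" by auto
  then have "valid i" "\<bar>idx_l i - idx_l j\<bar> \<le> L1" "\<bar>idx_m i - idx_m j\<bar> \<le> L1"
    and "valid k" "\<bar>idx_l j - idx_l k\<bar> \<le> L2" "\<bar>idx_m j - idx_m k\<bar> \<le> L2"
    using banded_nonzero[OF assms(1)] banded_nonzero[OF assms(2)] by blast+
  then show "valid i \<and> valid k \<and> \<bar>idx_l i - idx_l k\<bar> \<le> L1 + L2 \<and> \<bar>idx_m i - idx_m k\<bar> \<le> L1 + L2"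
    by linarith
qed

lemma entries_bounded_mmult:
  assumes "banded L M" "entries_bounded C1 M" "entries_bounded C2 N"
  shows "entries_bounded (real (card (offset_box L)) * (C1 * C2)) (mmult M N)"
  unfolding entries_bounded_def
proof
  fix i show "\<forall>k. cmod (mmult M N i k) \<le> real (card (offset_box L)) * (C1 * C2)"
  proof
    fix k
    have "cmod (mmult M N i k) \<le> (\<Sum>j\<in>band_nbhd L i. cmod (M i j * N j k))"
      unfolding mmult_eq_sum_superset[OF assms(1) finite_band_nbhd order_refl] by (rule norm_sum)
    also have "\<dots> = (\<Sum>j\<in>band_nbhd L i. cmod (M i j) * cmod (N j k))"
      by (simp add: norm_mult)
    also have "\<dots> \<le> real (card (band_nbhd L i)) * (C1 * C2)"
      using entries_bounded_nonneg[OF assms(2)]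
      by (intro sum_bounded_above mult_mono entries_boundedD[OF assms(2)] entries_boundedD[OF assms(3)])
        auto
    also have "\<dots> \<le> real (card (offset_box L)) * (C1 * C2)"
      using card_band_nbhd_le entries_bounded_nonneg[OF assms(2)] entries_bounded_nonneg[OF assms(3)]
      by (intro mult_right_mono) auto
    finally show "cmod (mmult M N i k) \<le> real (card (offset_box L)) * (C1 * C2)" .
  qed
qed

lemma banded_bounded_mmult: "banded_bounded M \<Longrightarrow> banded_bounded N \<Longrightarrow> banded_bounded (mmult M N)"
  unfolding banded_bounded_def using banded_mmult entries_bounded_mmult by blast

lemma banded_mono:
  assumes "banded L M" "L \<le> L'"
  shows "banded L' M"
  unfolding banded_def
proof (intro allI impI)
  fix i k assume "M i k \<noteq> 0"
  with banded_nonzero[OF assms(1)] assms(2)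
  show "valid i \<and> valid k \<and> \<bar>idx_l i - idx_l k\<bar> \<le> L' \<and> \<bar>idx_m i - idx_m k\<bar> \<le> L'"
    by fastforce
qed

lemma banded_madd:
  assumes "banded L M" "banded L N"
  shows "banded L (madd M N)"
  unfolding banded_def
proof (intro allI impI)
  fix i k assume "madd M N i k \<noteq> 0"
  then have "M i k \<noteq> 0 \<or> N i k \<noteq> 0" unfolding madd_def by auto
  then show "valid i \<and> valid k \<and> \<bar>idx_l i - idx_l k\<bar> \<le> L \<and> \<bar>idx_m i - idx_m k\<bar> \<le> L"
    using banded_nonzero[OF assms(1)] banded_nonzero[OF assms(2)] by blast
qed

lemma banded_bounded_madd:
  assumes "banded_bounded M" "banded_bounded N"
  shows "banded_bounded (madd M N)"
proof -
  obtain L1 C1 L2 C2 where M: "banded L1 M" "entries_bounded C1 M"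
    and N: "banded L2 N" "entries_bounded C2 N"
    using assms unfolding banded_bounded_def by blast
  have "banded (max L1 L2) (madd M N)"
    using banded_mono[OF M(1) max.cobounded1] banded_mono[OF N(1) max.cobounded2]
    by (rule banded_madd)
  moreover have "entries_bounded (C1 + C2) (madd M N)"
    using M(2) N(2) unfolding entries_bounded_def madd_def by (meson add_mono norm_triangle_le)
  ultimately show ?thesis unfolding banded_bounded_def by blast
qed

lemma banded_bounded_msmult:
  assumes "banded_bounded M"
  shows "banded_bounded (msmult c M)"
proof -
  obtain L C where M: "banded L M" "entries_bounded C M"
    using assms unfolding banded_bounded_def by blast
  have "banded L (msmult c M)"
    unfolding banded_def
  proof (intro allI impI)
    fix i k assume "msmult c M i k \<noteq> 0"
    then have "M i k \<noteq> 0" unfolding msmult_def by simp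
    then show "valid i \<and> valid k \<and> \<bar>idx_l i - idx_l k\<bar> \<le> L \<and> \<bar>idx_m i - idx_m k\<bar> \<le> L"
      by (rule banded_nonzero[OF M(1)])
  qed
  moreover have "entries_bounded (cmod c * C) (msmult c M)"
    using M(2) unfolding entries_bounded_def msmult_def by (simp add: norm_mult mult_left_mono)
  ultimately show ?thesis unfolding banded_bounded_def by blast
qed

lemma banded_bounded_madj:
  assumes "banded_bounded M"
  shows "banded_bounded (madj M)"
proof -
  obtain L C where M: "banded L M" "entries_bounded C M"
    using assms unfolding banded_bounded_def by blast
  have "banded L (madj M)"
    unfolding banded_def
  proof (intro allI impI)
    fix i k assume "madj M i k \<noteq> 0"
    then have "M k i \<noteq> 0" unfolding madj_def by simp
    from banded_nonzero[OF M(1) this]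
    show "valid i \<and> valid k \<and> \<bar>idx_l i - idx_l k\<bar> \<le> L \<and> \<bar>idx_m i - idx_m k\<bar> \<le> L"
      by (simp add: abs_minus_commute)
  qed
  moreover have "entries_bounded C (madj M)"
    using M(2) unfolding entries_bounded_def madj_def by simp
  ultimately show ?thesis unfolding banded_bounded_def by blast
qed

lemma banded_bounded_mone: "banded_bounded mone"
proof -
  have "banded 0 mone" "entries_bounded 1 mone"
    unfolding banded_def entries_bounded_def mone_def by simp_all
  then show ?thesis unfolding banded_bounded_def by blast
qed

lemma alg_gen_banded_bounded:
  assumes "T \<in> alg_gen G" "\<And>S. S \<in> G \<Longrightarrow> banded_bounded S"
  shows "banded_bounded T"
  using assms(1)
proof (induction rule: alg_gen.induct)
  case (gen T) then show ?case by (rule assms(2))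
next
  case one then show ?case by (rule banded_bounded_mone)
next
  case (add S T) then show ?case by (simp add: banded_bounded_madd)
next
  case (smult T c) then show ?case by (simp add: banded_bounded_msmult)
next
  case (mult S T) then show ?case by (simp add: banded_bounded_mmult)
qed

lemma mapply_eq_sum_band:
  assumes "banded L M" "finite S" "\<And>j. j \<notin> S \<Longrightarrow> v j = 0"
  shows "mapply M v i = (\<Sum>j\<in>S \<inter> band_nbhd L i. M i j * v j)"
  unfolding mapply_def
proof (rule infsum_eq_sum_superset)
  show "finite (S \<inter> band_nbhd L i)" using assms(2) by simp
  fix j assume j: "j \<notin> S \<inter> band_nbhd L i"
  show "M i j * v j = 0"
  proof (cases "j \<in> S")
    case True
    then have "M i j = 0" using j banded_row[OF assms(1), of i j] by blast
    then show ?thesis by simp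
  qed (simp add: assms(3))
qed

lemma mapply_row_sq_le:
  assumes "banded L M" "entries_bounded C M" "finite S" "\<And>j. j \<notin> S \<Longrightarrow> v j = 0"
  shows "(cmod (mapply M v i))\<^sup>2
    \<le> C\<^sup>2 * card (offset_box L) * (\<Sum>j\<in>S \<inter> band_nbhd L i. (cmod (v j))\<^sup>2)"
proof -
  let ?F = "S \<inter> band_nbhd L i"
  have "cmod (mapply M v i) = cmod (\<Sum>j\<in>?F. M i j * v j)"
    using mapply_eq_sum_band[OF assms(1,3,4)] by simp
  also have "\<dots> \<le> (\<Sum>j\<in>?F. cmod (M i j * v j))"
    by (rule norm_sum)
  also have "\<dots> \<le> (\<Sum>j\<in>?F. C * cmod (v j))"
    by (intro sum_mono) (simp add: norm_mult entries_boundedD[OF assms(2)] mult_right_mono)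
  finally have "(cmod (mapply M v i))\<^sup>2 \<le> (C * (\<Sum>j\<in>?F. cmod (v j)))\<^sup>2"
    by (simp add: power_mono sum_distrib_left)
  also have "\<dots> \<le> C\<^sup>2 * (card ?F * (\<Sum>j\<in>?F. (cmod (v j))\<^sup>2))"
    using Cauchy_Schwarz_ineq_sum[of "\<lambda>j. cmod (v j)" "\<lambda>_. 1" ?F]
    by (simp add: power_mult_distrib mult.commute mult_left_mono)
  also have "\<dots> \<le> C\<^sup>2 * (card (offset_box L) * (\<Sum>j\<in>?F. (cmod (v j))\<^sup>2))"
  proof -
    have "card ?F \<le> card (offset_box L)"
      using card_mono[OF finite_band_nbhd, of ?F L i] card_band_nbhd_le[of L i] by simp
    then show ?thesis by (intro mult_left_mono mult_right_mono) (auto intro: sum_nonneg)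
  qed
  finally show ?thesis by (simp add: mult.assoc)
qed

lemma sum_band_nbhd_swap_le:
  fixes w :: "idx \<Rightarrow> real"
  assumes "finite R" "finite S" "\<And>j. 0 \<le> w j"
  shows "(\<Sum>i\<in>R. \<Sum>j\<in>S \<inter> band_nbhd L i. w j) \<le> card (offset_box L) * (\<Sum>j\<in>S. w j)"
proof -
  have "(\<Sum>i\<in>R. \<Sum>j\<in>S \<inter> band_nbhd L i. w j)
      = (\<Sum>i\<in>R. \<Sum>j\<in>S. if j \<in> band_nbhd L i then w j else 0)"
    by (simp add: sum.inter_restrict[OF assms(2)])
  also have "\<dots> = (\<Sum>j\<in>S. \<Sum>i\<in>R. if j \<in> band_nbhd L i then w j else 0)"
    by (rule sum.swap)
  also have "\<dots> = (\<Sum>j\<in>S. card (R \<inter> {i. j \<in> band_nbhd L i}) * w j)"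
    by (simp add: sum.If_cases[OF assms(1)])
  also have "\<dots> \<le> (\<Sum>j\<in>S. card (offset_box L) * w j)"
  proof (intro sum_mono mult_right_mono)
    fix j
    have "R \<inter> {i. j \<in> band_nbhd L i} \<subseteq> band_nbhd L j"
      using band_nbhd_sym by blast
    then have "card (R \<inter> {i. j \<in> band_nbhd L i}) \<le> card (band_nbhd L j)"
      by (rule card_mono[OF finite_band_nbhd])
    then show "real (card (R \<inter> {i. j \<in> band_nbhd L i})) \<le> card (offset_box L)"
      using card_band_nbhd_le[of L j] by linarith
  qed (rule assms(3))
  finally show ?thesis by (simp add: sum_distrib_left)
qed

lemma banded_bounded_imp_mbounded:
  assumes "banded_bounded M"
  shows "mbounded M"
proof -
  obtain L C where M: "banded L M" "entries_bounded C M"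
    using assms unfolding banded_bounded_def by blast
  define K where "K = real (card (offset_box L))"
  show ?thesis unfolding mbounded_def
  proof (intro exI allI impI conjI)
    fix v assume "finsupp_vec v"
    define S where "S = {j. v j \<noteq> 0}"
    have S: "finite S" "\<And>j. j \<notin> S \<Longrightarrow> v j = 0"
      using \<open>finsupp_vec v\<close> unfolding finsupp_vec_def S_def by auto
    define R where "R = (\<Union>j\<in>S. band_nbhd L j)"
    have "finite R" unfolding R_def using S(1) finite_band_nbhd by blast
    have outside_R: "mapply M v i = 0" if "i \<notin> R" for i
    proof -
      have "S \<inter> band_nbhd L i = {}"
        using that band_nbhd_sym unfolding R_def by blast
      then show ?thesis by (simp add: mapply_eq_sum_band[OF M(1) S])
    qed
    show "(\<lambda>i. (cmod (mapply M v i))\<^sup>2) summable_on UNIV"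
      by (rule summable_on_finite_support[OF \<open>finite R\<close>]) (simp add: outside_R)
    have "vnorm2 (mapply M v) = (\<Sum>i\<in>R. (cmod (mapply M v i))\<^sup>2)"
      unfolding vnorm2_def
      by (rule infsum_eq_sum_superset[OF \<open>finite R\<close>]) (simp add: outside_R)
    also have "\<dots> \<le> (\<Sum>i\<in>R. C\<^sup>2 * K * (\<Sum>j\<in>S \<inter> band_nbhd L i. (cmod (v j))\<^sup>2))"
      unfolding K_def by (intro sum_mono mapply_row_sq_le[OF M S])
    also have "\<dots> \<le> C\<^sup>2 * K * (K * (\<Sum>j\<in>S. (cmod (v j))\<^sup>2))"
      unfolding sum_distrib_left[symmetric] K_def
      by (intro mult_left_mono sum_band_nbhd_swap_le \<open>finite R\<close> S(1)) auto
    also have "(\<Sum>j\<in>S. (cmod (v j))\<^sup>2) = vnorm2 v"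
      unfolding vnorm2_def by (rule infsum_eq_sum_superset[OF S(1), symmetric]) (simp add: S(2))
    finally show "vnorm2 (mapply M v) \<le> (C\<^sup>2 * K * K) * vnorm2 v"
      by (simp add: mult.assoc)
  qed
qed

section \<open>The Dirac operator\<close>

definition flip_sign :: "idx \<Rightarrow> idx" where
  "flip_sign i = (\<not> fst i, snd i)"

definition dirac_eig :: "idx \<Rightarrow> real" where
  "dirac_eig i = (if valid i then idx_l i + 1/2 else 0)"

lemma flip_sign_flip_sign [simp]: "flip_sign (flip_sign i) = i"
  unfolding flip_sign_def by simp

lemma snd_flip_sign [simp]: "snd (flip_sign i) = snd i"
  unfolding flip_sign_def by simp

lemma valid_flip_sign [simp]: "valid (flip_sign i) = valid i"
  unfolding flip_sign_def valid_def by (simp split: prod.splits)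

lemma dirac_eig_flip_sign [simp]: "dirac_eig (flip_sign i) = dirac_eig i"
  unfolding dirac_eig_def by simp

lemma flip_sign_eq_iff: "i = flip_sign k \<longleftrightarrow> k = flip_sign i"
  by (metis flip_sign_flip_sign)

lemma inj_flip_sign: "inj flip_sign"
  by (metis flip_sign_flip_sign injI)

lemma Dmat_eq: "Dmat i j = (if j = flip_sign i then complex_of_real (dirac_eig i) else 0)"
  unfolding Dmat_def dirac_eig_def flip_sign_def valid_def by (auto split: prod.splits)

lemma absDmat_eq: "absDmat i j = (if j = i then complex_of_real (dirac_eig i) else 0)"
  unfolding absDmat_def dirac_eig_def by (auto split: prod.splits)

lemma hermitian_Dmat: "hermitian Dmat"
  unfolding hermitian_def Dmat_eq by (simp add: flip_sign_eq_iff)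

lemma mcomm_Dmat_apply:
  "mcomm Dmat T i k
     = complex_of_real (dirac_eig i) * T (flip_sign i) k - T i (flip_sign k) * complex_of_real (dirac_eig k)"
proof -
  have "mmult Dmat T i k = (\<Sum>j\<in>{flip_sign i}. Dmat i j * T j k)"
    unfolding mmult_def by (rule infsum_eq_sum_superset) (auto simp: Dmat_eq)
  moreover have "mmult T Dmat i k = (\<Sum>j\<in>{flip_sign k}. T i j * Dmat j k)"
    unfolding mmult_def by (rule infsum_eq_sum_superset) (auto simp: Dmat_eq)
  ultimately show ?thesis unfolding mcomm_def by (simp add: Dmat_eq)
qed

lemma delta_apply: "delta T i k = complex_of_real (dirac_eig i - dirac_eig k) * T i k"
proof -
  have "mmult absDmat T i k = (\<Sum>j\<in>{i}. absDmat i j * T j k)"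
    unfolding mmult_def by (rule infsum_eq_sum_superset) (auto simp: absDmat_eq)
  moreover have "mmult T absDmat i k = (\<Sum>j\<in>{k}. T i j * absDmat j k)"
    unfolding mmult_def by (rule infsum_eq_sum_superset) (auto simp: absDmat_eq)
  ultimately show ?thesis unfolding delta_def mcomm_def by (simp add: absDmat_eq algebra_simps)
qed

lemma banded_mcomm_Dmat:
  assumes "banded L M"
  shows "banded L (mcomm Dmat M)"
  unfolding banded_def
proof (intro allI impI)
  fix i k assume "mcomm Dmat M i k \<noteq> 0"
  then have "M (flip_sign i) k \<noteq> 0 \<or> M i (flip_sign k) \<noteq> 0"
    unfolding mcomm_Dmat_apply by auto
  then show "valid i \<and> valid k \<and> \<bar>idx_l i - idx_l k\<bar> \<le> L \<and> \<bar>idx_m i - idx_m k\<bar> \<le> L"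
    using banded_nonzero[OF assms, of "flip_sign i" k] banded_nonzero[OF assms, of i "flip_sign k"]
    by auto
qed

text \<open>On a band of width \<open>L\<close> the eigenvalues of \<open>|D|\<close> differ by at most \<open>L\<close>, so \<open>\<delta>\<close> multiplies
  each entry by a factor of modulus at most \<open>L\<close>.\<close>
lemma banded_bounded_delta:
  assumes "banded_bounded T"
  shows "banded_bounded (delta T)"
proof -
  obtain L C where T: "banded L T" "entries_bounded C T"
    using assms unfolding banded_bounded_def by blast
  have "banded L (delta T)"
    unfolding banded_def
  proof (intro allI impI)
    fix i k assume "delta T i k \<noteq> 0"
    then have "T i k \<noteq> 0" unfolding delta_apply by simp
    then show "valid i \<and> valid k \<and> \<bar>idx_l i - idx_l k\<bar> \<le> L \<and> \<bar>idx_m i - idx_m k\<bar> \<le> L"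
      by (rule banded_nonzero[OF T(1)])
  qed
  moreover have "entries_bounded (\<bar>L\<bar> * C) (delta T)"
    unfolding entries_bounded_def
  proof (intro allI)
    fix i k
    show "cmod (delta T i k) \<le> \<bar>L\<bar> * C"
    proof (cases "T i k = 0")
      case True
      then show ?thesis unfolding delta_apply using entries_bounded_nonneg[OF T(2)] by simp
    next
      case False
      from banded_nonzero[OF T(1) False]
      have "dirac_eig i - dirac_eig k = idx_l i - idx_l k" "\<bar>idx_l i - idx_l k\<bar> \<le> \<bar>L\<bar>"
        unfolding dirac_eig_def by auto
      then have "\<bar>dirac_eig i - dirac_eig k\<bar> \<le> \<bar>L\<bar>" by simp
      then show ?thesis
        unfolding delta_apply norm_mult norm_of_real
        using entries_boundedD[OF T(2), of i k] by (simp add: mult_mono)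
    qed
  qed
  ultimately show ?thesis unfolding banded_bounded_def by blast
qed

lemma banded_bounded_delta_pow: "banded_bounded T \<Longrightarrow> banded_bounded ((delta ^^ n) T)"
  by (induction n) (simp_all add: banded_bounded_delta)

lemma mcomm_Dmat_mmult:
  assumes "banded L M"
  shows "mcomm Dmat (mmult M N) = madd (mmult (mcomm Dmat M) N) (mmult M (mcomm Dmat N))"
proof (intro ext)
  fix i k
  let ?c = "\<lambda>j. complex_of_real (dirac_eig j)"
  define G where "G = band_nbhd L i \<union> band_nbhd L (flip_sign i)"
  define F where "F = G \<union> flip_sign ` G"
  have "finite F" unfolding F_def G_def by (simp add: finite_band_nbhd)
  have flip_F: "flip_sign ` F = F"
    unfolding F_def by (simp add: image_Un image_image Un_commute)
  have F: "band_nbhd L i \<subseteq> F" "band_nbhd L (flip_sign i) \<subseteq> F"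
    unfolding F_def G_def by auto
  note sum_F = mmult_eq_sum_superset[OF _ \<open>finite F\<close>]
  have reindex: "(\<Sum>j\<in>F. M i (flip_sign j) * ?c j * N j k) = (\<Sum>j\<in>F. M i j * ?c j * N (flip_sign j) k)"
    using sum.reindex[OF inj_on_subset[OF inj_flip_sign subset_UNIV], of "\<lambda>j. M i j * ?c j * N (flip_sign j) k" F]
    by (simp add: flip_F comp_def)
  have "madd (mmult (mcomm Dmat M) N) (mmult M (mcomm Dmat N)) i k
      = (\<Sum>j\<in>F. (?c i * M (flip_sign i) j - M i (flip_sign j) * ?c j) * N j k)
        + (\<Sum>j\<in>F. M i j * (?c j * N (flip_sign j) k - N j (flip_sign k) * ?c k))"
    unfolding madd_def sum_F[OF banded_mcomm_Dmat[OF assms] F(1)] sum_F[OF assms F(1)]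
      mcomm_Dmat_apply ..
  also have "\<dots> = ?c i * (\<Sum>j\<in>F. M (flip_sign i) j * N j k) - (\<Sum>j\<in>F. M i (flip_sign j) * ?c j * N j k)
        + (\<Sum>j\<in>F. M i j * ?c j * N (flip_sign j) k) - (\<Sum>j\<in>F. M i j * N j (flip_sign k)) * ?c k"
    by (simp add: algebra_simps sum_subtractf sum_distrib_left sum_distrib_right)
  also have "\<dots> = mcomm Dmat (mmult M N) i k"
    unfolding reindex mcomm_Dmat_apply sum_F[OF assms F(1)] sum_F[OF assms F(2)] by simp
  finally show "mcomm Dmat (mmult M N) i k = madd (mmult (mcomm Dmat M) N) (mmult M (mcomm Dmat N)) i k"
    by simp
qed

lemma mcomm_Dmat_madd: "mcomm Dmat (madd M N) = madd (mcomm Dmat M) (mcomm Dmat N)"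
  by (intro ext) (simp add: mcomm_Dmat_apply madd_def algebra_simps)

lemma mcomm_Dmat_msmult: "mcomm Dmat (msmult c M) = msmult c (mcomm Dmat M)"
  by (intro ext) (simp add: mcomm_Dmat_apply msmult_def algebra_simps)

lemma mcomm_Dmat_madj: "mcomm Dmat (madj M) = msmult (-1) (madj (mcomm Dmat M))"
  by (intro ext) (simp add: mcomm_Dmat_apply msmult_def madj_def algebra_simps)

lemma mcomm_Dmat_mone: "mcomm Dmat mone = msmult 0 mone"
proof (intro ext)
  fix i k
  show "mcomm Dmat mone i k = msmult 0 mone i k"
  proof (cases "k = flip_sign i")
    case False
    then have "flip_sign i \<noteq> k" "i \<noteq> flip_sign k" by (auto simp: flip_sign_eq_iff)
    then show ?thesis by (simp add: mcomm_Dmat_apply msmult_def mone_def)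
  qed (simp add: mcomm_Dmat_apply msmult_def mone_def)
qed

definition lipschitz_banded :: "mat \<Rightarrow> bool" where
  "lipschitz_banded M \<longleftrightarrow> banded_bounded M \<and> banded_bounded (mcomm Dmat M)"

lemma lipschitz_banded_mmult:
  assumes "lipschitz_banded M" "lipschitz_banded N"
  shows "lipschitz_banded (mmult M N)"
proof -
  obtain L where "banded L M"
    using assms(1) unfolding lipschitz_banded_def banded_bounded_def by blast
  then show ?thesis
    using assms unfolding lipschitz_banded_def mcomm_Dmat_mmult[OF \<open>banded L M\<close>]
    by (simp add: banded_bounded_mmult banded_bounded_madd)
qed

lemma lipschitz_banded_madd: "lipschitz_banded M \<Longrightarrow> lipschitz_banded N \<Longrightarrow> lipschitz_banded (madd M N)"
  unfolding lipschitz_banded_def mcomm_Dmat_madd by (simp add: banded_bounded_madd)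

lemma lipschitz_banded_msmult: "lipschitz_banded M \<Longrightarrow> lipschitz_banded (msmult c M)"
  unfolding lipschitz_banded_def mcomm_Dmat_msmult by (simp add: banded_bounded_msmult)

lemma lipschitz_banded_madj: "lipschitz_banded M \<Longrightarrow> lipschitz_banded (madj M)"
  unfolding lipschitz_banded_def mcomm_Dmat_madj by (simp add: banded_bounded_msmult banded_bounded_madj)

lemma lipschitz_banded_mone: "lipschitz_banded mone"
  unfolding lipschitz_banded_def mcomm_Dmat_mone by (simp add: banded_bounded_msmult banded_bounded_mone)

lemma alg_gen_lipschitz_banded:
  assumes "T \<in> alg_gen G" "\<And>S. S \<in> G \<Longrightarrow> lipschitz_banded S"
  shows "lipschitz_banded T"
  using assms(1)
proof (induction rule: alg_gen.induct)
  case (gen T) then show ?case by (rule assms(2))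
next
  case one then show ?case by (rule lipschitz_banded_mone)
next
  case (add S T) then show ?case by (simp add: lipschitz_banded_madd)
next
  case (smult T c) then show ?case by (simp add: lipschitz_banded_msmult)
next
  case (mult S T) then show ?case by (simp add: lipschitz_banded_mmult)
qed

lemma abs_sgnb [simp]: "\<bar>sgnb s\<bar> = 1"
  unfolding sgnb_def by simp

lemma valid_sign_cong: "valid (s, l, m) \<longleftrightarrow> valid (s', l, m)"
  unfolding valid_def by simp

lemma valid_half: "valid (s, 1/2, 1/2)"
  unfolding valid_def by (auto intro: exI[of _ 0])

text \<open>A matrix preserving the sign of the basis vectors, acting on \<open>H\<^sub>+\<close> by the coefficients \<open>g + h\<close>
  and on \<open>H\<^sub>-\<close> by \<open>g - h\<close>; the arguments of \<open>g\<close> and \<open>h\<close> are \<open>l' m' l m\<close>.\<close>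
definition sign_diagonal :: "(real \<Rightarrow> real \<Rightarrow> real \<Rightarrow> real \<Rightarrow> real) \<Rightarrow> (real \<Rightarrow> real \<Rightarrow> real \<Rightarrow> real \<Rightarrow> real) \<Rightarrow> mat" where
  "sign_diagonal g h = (\<lambda>(s', l', m') (s, l, m).
     if valid (s', l', m') \<and> valid (s, l, m) \<and> s' = s
     then complex_of_real (g l' m' l m + sgnb s * h l' m' l m) else 0)"

lemma sign_diagonal_apply:
  "sign_diagonal g h (s', l', m') (s, l, m) =
     (if valid (s', l', m') \<and> valid (s, l, m) \<and> s' = s
      then complex_of_real (g l' m' l m + sgnb s * h l' m' l m) else 0)"
  by (simp add: sign_diagonal_def)

lemma mcomm_Dmat_sign_diagonal_apply:
  assumes "\<And>l' m' l m. h l' m' l m \<noteq> 0 \<Longrightarrow> l' = l"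
  shows "mcomm Dmat (sign_diagonal g h) (s', l', m') (s, l, m) =
     (if valid (s', l', m') \<and> valid (s, l, m) \<and> s' \<noteq> s
      then complex_of_real ((l' - l) * g l' m' l m + (l + 1/2) * (sgnb s - sgnb s') * h l' m' l m)
      else 0)"
proof -
  let ?g = "g l' m' l m" and ?h = "h l' m' l m"
  have "mcomm Dmat (sign_diagonal g h) (s', l', m') (s, l, m) =
     (if valid (s', l', m') \<and> valid (s, l, m) \<and> s' \<noteq> s
      then complex_of_real ((l' + 1/2) * (?g + sgnb s * ?h) - (?g + sgnb s' * ?h) * (l + 1/2))
      else 0)"
    unfolding mcomm_Dmat_apply flip_sign_def dirac_eig_def
    using valid_sign_cong[of s' l' m' "\<not> s'"] valid_sign_cong[of s l m "\<not> s"]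
    by (auto simp: sign_diagonal_apply)
  also have "(l' + 1/2) * (?g + sgnb s * ?h) - (?g + sgnb s' * ?h) * (l + 1/2)
      = (l' - l) * ?g + (l + 1/2) * (sgnb s - sgnb s') * ?h"
    using assms[of l' m' l m] by (cases "?h = 0") (auto simp: field_simps)
  finally show ?thesis .
qed

lemma banded_sign_diagonal:
  assumes "\<And>l' m' l m. g l' m' l m \<noteq> 0 \<Longrightarrow> \<bar>l' - l\<bar> \<le> 1 \<and> \<bar>m' - m\<bar> \<le> 1"
    and "\<And>l' m' l m. h l' m' l m \<noteq> 0 \<Longrightarrow> \<bar>l' - l\<bar> \<le> 1 \<and> \<bar>m' - m\<bar> \<le> 1"
  shows "banded 1 (sign_diagonal g h)"
  unfolding banded_def split_paired_All prod.sel
proof (intro allI impI)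
  fix s' l' m' s l m assume "sign_diagonal g h (s', l', m') (s, l, m) \<noteq> 0"
  then have "valid (s', l', m') \<and> valid (s, l, m)" "g l' m' l m \<noteq> 0 \<or> h l' m' l m \<noteq> 0"
    by (auto simp: sign_diagonal_apply split: if_splits)
  then show "valid (s', l', m') \<and> valid (s, l, m) \<and> \<bar>l' - l\<bar> \<le> 1 \<and> \<bar>m' - m\<bar> \<le> 1"
    using assms[of l' m' l m] by auto
qed

lemma entries_bounded_sign_diagonal:
  assumes "\<And>s' l' m' s l m. valid (s', l', m') \<Longrightarrow> valid (s, l, m) \<Longrightarrow> \<bar>g l' m' l m\<bar> \<le> Cg"
    and "\<And>s' l' m' s l m. valid (s', l', m') \<Longrightarrow> valid (s, l, m) \<Longrightarrow> \<bar>h l' m' l m\<bar> \<le> Ch"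
    and "0 \<le> Cg" "0 \<le> Ch"
  shows "entries_bounded (Cg + Ch) (sign_diagonal g h)"
  unfolding entries_bounded_def split_paired_All
proof (intro allI)
  fix s' l' m' s l m
  have "\<bar>g l' m' l m + sgnb s * h l' m' l m\<bar> \<le> Cg + Ch"
    if "valid (s', l', m')" "valid (s, l, m)"
  proof -
    have "\<bar>g l' m' l m + sgnb s * h l' m' l m\<bar> \<le> \<bar>g l' m' l m\<bar> + \<bar>h l' m' l m\<bar>"
      using abs_triangle_ineq[of "g l' m' l m" "sgnb s * h l' m' l m"] by (simp add: abs_mult)
    then show ?thesis using assms(1,2)[OF that] by linarith
  qed
  then show "cmod (sign_diagonal g h (s', l', m') (s, l, m)) \<le> Cg + Ch"
    using assms(3,4) by (auto simp: sign_diagonal_apply simp del: of_real_add of_real_mult)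
qed

lemma entries_bounded_mcomm_Dmat_sign_diagonal:
  assumes g_band: "\<And>l' m' l m. g l' m' l m \<noteq> 0 \<Longrightarrow> \<bar>l' - l\<bar> \<le> 1"
    and h_diag: "\<And>l' m' l m. h l' m' l m \<noteq> 0 \<Longrightarrow> l' = l"
    and g_bound: "\<And>s' l' m' s l m. valid (s', l', m') \<Longrightarrow> valid (s, l, m) \<Longrightarrow> \<bar>g l' m' l m\<bar> \<le> Cg"
    and h_decay: "\<And>s' l' m' s l m. valid (s', l', m') \<Longrightarrow> valid (s, l, m) \<Longrightarrow>
                    (l + 1/2) * \<bar>h l' m' l m\<bar> \<le> Ch"
    and "0 \<le> Cg" "0 \<le> Ch"
  shows "entries_bounded (Cg + 2 * Ch) (mcomm Dmat (sign_diagonal g h))"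
  unfolding entries_bounded_def split_paired_All
proof (intro allI)
  fix s' l' m' s l m
  have "\<bar>(l' - l) * g l' m' l m + (l + 1/2) * (sgnb s - sgnb s') * h l' m' l m\<bar> \<le> Cg + 2 * Ch"
    if v: "valid (s', l', m')" "valid (s, l, m)"
  proof -
    have "\<bar>(l' - l) * g l' m' l m\<bar> \<le> Cg"
      using g_band[of l' m' l m] g_bound[OF v] mult_mono[of "\<bar>l' - l\<bar>" 1 "\<bar>g l' m' l m\<bar>" Cg]
      by (cases "g l' m' l m = 0") (auto simp: abs_mult \<open>0 \<le> Cg\<close>)
    moreover have "\<bar>(l + 1/2) * (sgnb s - sgnb s') * h l' m' l m\<bar> \<le> 2 * Ch"
    proof -
      have "0 \<le> l + 1/2" using valid_bounds[OF v(2)] by simp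
      then have "\<bar>(l + 1/2) * (sgnb s - sgnb s') * h l' m' l m\<bar>
          = \<bar>sgnb s - sgnb s'\<bar> * ((l + 1/2) * \<bar>h l' m' l m\<bar>)"
        by (simp add: abs_mult)
      also have "\<dots> \<le> 2 * Ch"
        using h_decay[OF v] \<open>0 \<le> l + 1/2\<close> by (intro mult_mono) (auto simp: sgnb_def)
      finally show ?thesis .
    qed
    ultimately show ?thesis by linarith
  qed
  then show "cmod (mcomm Dmat (sign_diagonal g h) (s', l', m') (s, l, m)) \<le> Cg + 2 * Ch"
    using \<open>0 \<le> Cg\<close> \<open>0 \<le> Ch\<close> h_diag
    by (auto simp: mcomm_Dmat_sign_diagonal_apply simp del: of_real_add of_real_mult)
qed

lemma lipschitz_banded_sign_diagonal:
  assumes g_band: "\<And>l' m' l m. g l' m' l m \<noteq> 0 \<Longrightarrow> \<bar>l' - l\<bar> \<le> 1 \<and> \<bar>m' - m\<bar> \<le> 1"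
    and h_band: "\<And>l' m' l m. h l' m' l m \<noteq> 0 \<Longrightarrow> l' = l \<and> \<bar>m' - m\<bar> \<le> 1"
    and g_bound: "\<And>s' l' m' s l m. valid (s', l', m') \<Longrightarrow> valid (s, l, m) \<Longrightarrow> \<bar>g l' m' l m\<bar> \<le> Cg"
    and h_decay: "\<And>s' l' m' s l m. valid (s', l', m') \<Longrightarrow> valid (s, l, m) \<Longrightarrow>
                    (l + 1/2) * \<bar>h l' m' l m\<bar> \<le> Ch"
  shows "lipschitz_banded (sign_diagonal g h)"
proof -
  have "0 \<le> Cg" "0 \<le> Ch"
    using g_bound[OF valid_half valid_half] h_decay[OF valid_half valid_half] by auto
  have h_bound: "\<bar>h l' m' l m\<bar> \<le> Ch" if "valid (s', l', m')" "valid (s, l, m)" for s' l' m' s l m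
  proof -
    have "1 \<le> l + 1/2" using valid_bounds[OF that(2)] by simp
    then have "\<bar>h l' m' l m\<bar> \<le> (l + 1/2) * \<bar>h l' m' l m\<bar>" by (simp add: mult_le_cancel_right1)
    then show ?thesis using h_decay[OF that] by linarith
  qed
  have "banded 1 (sign_diagonal g h)"
  proof (rule banded_sign_diagonal)
    show "\<bar>l' - l\<bar> \<le> 1 \<and> \<bar>m' - m\<bar> \<le> 1" if "h l' m' l m \<noteq> 0" for l' m' l m
      using h_band[OF that] by simp
  qed (rule g_band)
  moreover have "entries_bounded (Cg + Ch) (sign_diagonal g h)"
    using g_bound h_bound \<open>0 \<le> Cg\<close> \<open>0 \<le> Ch\<close> by (rule entries_bounded_sign_diagonal)
  moreover have "entries_bounded (Cg + 2 * Ch) (mcomm Dmat (sign_diagonal g h))"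
    using g_band h_band g_bound h_decay \<open>0 \<le> Cg\<close> \<open>0 \<le> Ch\<close>
    by (intro entries_bounded_mcomm_Dmat_sign_diagonal) auto
  ultimately show ?thesis
    unfolding lipschitz_banded_def banded_bounded_def by (blast intro: banded_mcomm_Dmat)
qed

section \<open>The generators \<open>\<pi>(a)\<close> and \<open>\<pi>(b)\<close>\<close>

text \<open>\<open>a_up\<close>, \<open>a_down\<close>, \<open>a_mid\<close> are the coefficients of \<open>|l+1, m+1\<rangle>\<close>, \<open>|l-1, m+1\<rangle>\<close>,
  \<open>|l, m+1\<rangle>\<close> in \<open>\<pi>(a)|l, m\<rangle>\<close> up to sign, and \<open>b_up\<close>, \<open>b_down\<close>, \<open>b_mid\<close> those of
  \<open>|l+1, m\<rangle>\<close>, \<open>|l-1, m\<rangle>\<close>, \<open>|l, m\<rangle>\<close> in \<open>\<pi>(b)|l, m\<rangle>\<close>.\<close>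

definition a_up :: "real \<Rightarrow> real \<Rightarrow> real \<Rightarrow> real" where
  "a_up q l m = q powr (m - l - 1/2) * sqrt (qnum q (l + m + 1) * qnum q (l + m + 2)) / qnum q (2*l + 2)"

definition a_down :: "real \<Rightarrow> real \<Rightarrow> real \<Rightarrow> real" where
  "a_down q l m = q powr (m + l + 1/2) * sqrt (qnum q (l - m - 1) * qnum q (l - m)) / qnum q (2*l)"

definition a_mid :: "real \<Rightarrow> real \<Rightarrow> real \<Rightarrow> real" where
  "a_mid q l m = (1 + q\<^sup>2) * q powr (m - 1/2) * sqrt (qnum q (l + m + 1) * qnum q (l - m))
                   / (qnum q (2*l) * qnum q (2*l + 2))"

definition b_up :: "real \<Rightarrow> real \<Rightarrow> real \<Rightarrow> real" where
  "b_up q l m = q powr (m + 1) * sqrt (qnum q (l + m + 1) * qnum q (l - m + 1)) / qnum q (2*l + 2)"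

definition b_down :: "real \<Rightarrow> real \<Rightarrow> real \<Rightarrow> real" where
  "b_down q l m = q powr (m + 1) * sqrt (qnum q (l + m) * qnum q (l - m)) / qnum q (2*l)"

definition b_mid :: "real \<Rightarrow> real \<Rightarrow> real \<Rightarrow> real" where
  "b_mid q l m = (qnum q (l - m + 1) * qnum q (l + m) - q\<^sup>2 * qnum q (l - m) * qnum q (l + m + 1))
                   / (qnum q (2*l) * qnum q (2*l + 2))"

definition a_common :: "real \<Rightarrow> real \<Rightarrow> real \<Rightarrow> real \<Rightarrow> real \<Rightarrow> real" where
  "a_common q l' m' l m =
     (if m' = m + 1 then (if l' = l + 1 then a_up q l m else if l' = l - 1 then - a_down q l m else 0)
      else 0)"

definition a_signed :: "real \<Rightarrow> real \<Rightarrow> real \<Rightarrow> real \<Rightarrow> real \<Rightarrow> real" where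
  "a_signed q l' m' l m = (if l' = l \<and> m' = m + 1 then a_mid q l m else 0)"

definition b_common :: "real \<Rightarrow> real \<Rightarrow> real \<Rightarrow> real \<Rightarrow> real \<Rightarrow> real" where
  "b_common q l' m' l m =
     (if m' = m then (if l' = l + 1 then - b_up q l m else if l' = l - 1 then - b_down q l m else 0)
      else 0)"

definition b_signed :: "real \<Rightarrow> real \<Rightarrow> real \<Rightarrow> real \<Rightarrow> real \<Rightarrow> real" where
  "b_signed q l' m' l m = (if l' = l \<and> m' = m then b_mid q l m else 0)"

lemma piA_sign_diagonal: "piA q = sign_diagonal (a_common q) (a_signed q)"
  unfolding fun_eq_iff split_paired_All piA_def sign_diagonal_def a_common_def a_signed_def
    a_up_def a_down_def a_mid_def
  by (auto simp: mult.assoc)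

lemma piB_sign_diagonal: "piB q = sign_diagonal (b_common q) (b_signed q)"
  unfolding fun_eq_iff split_paired_All piB_def sign_diagonal_def b_common_def b_signed_def
    b_up_def b_down_def b_mid_def
  by auto

lemma valid_tuple_bounds: "valid (s, l, m) \<Longrightarrow> 1/2 \<le> l \<and> - l \<le> m \<and> m \<le> l"
  using valid_bounds[of "(s, l, m)"] by simp

context
  fixes q :: real
  assumes q_pos: "0 < q" and q_lt_1: "q < 1"
begin

lemma inv_q_minus_q_pos: "0 < 1/q - q"
proof -
  have "q * q < 1 * 1" using q_pos q_lt_1 by (intro mult_strict_mono) auto
  then show ?thesis using q_pos by (simp add: field_simps)
qed

lemma qnum_eq: "qnum q x = (q powr (- x) - q powr x) / (1/q - q)"
proof -
  have "qnum q x = (- (q powr (- x) - q powr x)) / (- (1/q - q))"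
    unfolding qnum_def by simp
  then show ?thesis by (simp only: minus_divide_divide)
qed

lemma qnum_nonneg: "0 \<le> x \<Longrightarrow> 0 \<le> qnum q x"
  unfolding qnum_eq using inv_q_minus_q_pos powr_mono'[of "- x" x q] q_pos q_lt_1 by simp

lemma qnum_mult_nonneg: "0 \<le> a \<Longrightarrow> 0 \<le> b \<Longrightarrow> 0 \<le> qnum q a * qnum q b"
  using qnum_nonneg by simp

lemma qnum_le: "qnum q x \<le> q powr (- x) / (1/q - q)"
  unfolding qnum_eq using inv_q_minus_q_pos by (simp add: divide_right_mono)

lemma qnum_ge:
  assumes "1 \<le> x"
  shows "q powr (1 - x) \<le> qnum q x"
proof -
  have "q powr (1 - x) * (1/q - q) = q powr (- x) - q powr (2 - x)"
    using q_pos by (simp add: powr_diff powr_minus_divide field_simps power2_eq_square)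
  also have "\<dots> \<le> q powr (- x) - q powr x"
    using assms q_pos q_lt_1 powr_mono'[of "2 - x" x q] by simp
  finally show ?thesis
    unfolding qnum_eq using inv_q_minus_q_pos by (simp add: le_divide_eq)
qed

lemma qnum_mult_le:
  assumes "0 \<le> a" "0 \<le> b"
  shows "qnum q a * qnum q b \<le> q powr (- (a + b)) / (1/q - q)\<^sup>2"
proof -
  have "qnum q a * qnum q b \<le> (q powr (- a) / (1/q - q)) * (q powr (- b) / (1/q - q))"
    using qnum_le qnum_nonneg assms inv_q_minus_q_pos by (intro mult_mono) auto
  also have "\<dots> = q powr (- (a + b)) / (1/q - q)\<^sup>2"
    using powr_add[of q "- a" "- b"] by (simp add: power2_eq_square)
  finally show ?thesis .
qed

lemma sqrt_qnum_mult_le: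
  assumes "0 \<le> a" "0 \<le> b"
  shows "sqrt (qnum q a * qnum q b) \<le> q powr (- (a + b) / 2) / (1/q - q)"
proof -
  have "q powr (- (a + b)) / (1/q - q)\<^sup>2 = (q powr (- (a + b) / 2) / (1/q - q))\<^sup>2"
    by (simp add: power2_eq_square powr_add[symmetric])
  then have "sqrt (qnum q a * qnum q b) \<le> sqrt ((q powr (- (a + b) / 2) / (1/q - q))\<^sup>2)"
    using qnum_mult_le[OF assms] by (simp only: real_sqrt_le_mono)
  also have "\<dots> = q powr (- (a + b) / 2) / (1/q - q)"
    using inv_q_minus_q_pos by simp
  finally show ?thesis .
qed

lemma qnum_mult_qnum_ge:
  assumes "1/2 \<le> l"
  shows "q powr (- (4 * l)) \<le> qnum q (2 * l) * qnum q (2 * l + 2)"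
proof -
  have "q powr (1 - 2 * l) * q powr (1 - (2 * l + 2)) \<le> qnum q (2 * l) * qnum q (2 * l + 2)"
    using assms q_pos by (intro mult_mono qnum_ge qnum_nonneg) auto
  then show ?thesis by (simp add: powr_add[symmetric])
qed

lemma powr_fraction_bound:
  assumes "0 \<le> S" "S \<le> q powr b / d" "q powr c \<le> N" "0 < d"
  shows "0 \<le> q powr a * S / N \<and> q powr a * S / N \<le> q powr (a + b - c) / d"
proof -
  have "0 < N" using assms(3) q_pos by (smt (verit) powr_gt_zero)
  have "q powr a * S / N \<le> q powr a * (q powr b / d) / q powr c"
    using assms q_pos by (intro frac_le mult_left_mono) auto
  also have "\<dots> = q powr (a + b - c) / d"
    by (simp add: powr_add powr_diff)
  finally show ?thesis using assms(1) \<open>0 < N\<close> by simp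
qed

lemma mult_powr_le_inverse_ln:
  assumes "0 \<le> x"
  shows "x * q powr x \<le> 1 / (- ln q)"
proof -
  have "0 < - ln q" using q_pos q_lt_1 by simp
  define y where "y = x * (- ln q)"
  have "x * q powr x * (- ln q) = y * exp (- y)"
    unfolding y_def powr_def using q_pos by (simp add: algebra_simps)
  also have "\<dots> \<le> exp y * exp (- y)"
    using exp_ge_add_one_self[of y] assms \<open>0 < - ln q\<close> unfolding y_def
    by (intro mult_right_mono) auto
  finally show ?thesis
    using \<open>0 < - ln q\<close> by (simp add: exp_minus field_simps)
qed

text \<open>The sign-dependent coefficients of \<open>\<pi>(a)\<close> and \<open>\<pi>(b)\<close> decay like \<open>q\<^bsup>2l\<^esup>\<close>, which beats the
  linear growth of the eigenvalues of \<open>D\<close>.\<close>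
lemma eigenvalue_mult_powr_bounded:
  assumes "1/2 \<le> l"
  shows "(l + 1/2) * q powr (2 * l - 1) \<le> q powr (-2) / (- ln q)"
proof -
  have split: "q powr (2 * l - 1) = q powr (2 * l + 1) * q powr (-2)"
    by (simp add: powr_add[symmetric])
  have "(l + 1/2) * q powr (2 * l - 1) \<le> (2 * l + 1) * q powr (2 * l - 1)"
    using assms by (intro mult_right_mono) auto
  also have "\<dots> = ((2 * l + 1) * q powr (2 * l + 1)) * q powr (-2)"
    unfolding split by simp
  also have "\<dots> \<le> (1 / (- ln q)) * q powr (-2)"
    using mult_powr_le_inverse_ln[of "2 * l + 1"] assms by (intro mult_right_mono) auto
  finally show ?thesis by simp
qed

lemma a_up_bound:
  assumes "valid (s, l, m)"
  shows "\<bar>a_up q l m\<bar> \<le> q powr (-1) / (1/q - q)"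
proof -
  have v: "1/2 \<le> l" "- l \<le> m" "m \<le> l" using valid_tuple_bounds[OF assms] by auto
  have ex: "(m - l - 1/2) + (- ((l + m + 1) + (l + m + 2)) / 2) - (1 - (2*l + 2)) = -1"
    by (simp add: field_simps)
  have "0 \<le> a_up q l m \<and>
      a_up q l m \<le> q powr ((m - l - 1/2) + (- ((l + m + 1) + (l + m + 2)) / 2) - (1 - (2*l + 2))) / (1/q - q)"
    unfolding a_up_def using v
    by (intro powr_fraction_bound sqrt_qnum_mult_le qnum_ge inv_q_minus_q_pos) (auto simp: qnum_mult_nonneg)
  then show ?thesis unfolding ex by simp
qed

lemma a_down_bound:
  assumes "valid (s, l, m)" "valid (s, l - 1, m + 1)"
  shows "\<bar>a_down q l m\<bar> \<le> 1 / (1/q - q)"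
proof -
  have v: "1/2 \<le> l" "- l \<le> m" "m + 1 \<le> l - 1"
    using valid_tuple_bounds[OF assms(1)] valid_tuple_bounds[OF assms(2)] by auto
  have ex: "(m + l + 1/2) + (- ((l - m - 1) + (l - m)) / 2) - (1 - 2*l) = 2 * (l + m)"
    by (simp add: field_simps)
  have "0 \<le> a_down q l m \<and>
      a_down q l m \<le> q powr ((m + l + 1/2) + (- ((l - m - 1) + (l - m)) / 2) - (1 - 2*l)) / (1/q - q)"
    unfolding a_down_def using v
    by (intro powr_fraction_bound sqrt_qnum_mult_le qnum_ge inv_q_minus_q_pos) (auto simp: qnum_mult_nonneg)
  moreover have "q powr (2 * (l + m)) / (1/q - q) \<le> 1 / (1/q - q)"
    using v q_pos q_lt_1 inv_q_minus_q_pos by (intro divide_right_mono powr_le1) auto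
  ultimately show ?thesis unfolding ex by simp
qed

lemma b_up_bound:
  assumes "valid (s, l, m)"
  shows "\<bar>b_up q l m\<bar> \<le> 1 / (1/q - q)"
proof -
  have v: "1/2 \<le> l" "- l \<le> m" "m \<le> l" using valid_tuple_bounds[OF assms] by auto
  have ex: "(m + 1) + (- ((l + m + 1) + (l - m + 1)) / 2) - (1 - (2*l + 2)) = l + m + 1"
    by (simp add: field_simps)
  have "0 \<le> b_up q l m \<and>
      b_up q l m \<le> q powr ((m + 1) + (- ((l + m + 1) + (l - m + 1)) / 2) - (1 - (2*l + 2))) / (1/q - q)"
    unfolding b_up_def using v
    by (intro powr_fraction_bound sqrt_qnum_mult_le qnum_ge inv_q_minus_q_pos) (auto simp: qnum_mult_nonneg)
  moreover have "q powr (l + m + 1) / (1/q - q) \<le> 1 / (1/q - q)"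
    using v q_pos q_lt_1 inv_q_minus_q_pos by (intro divide_right_mono powr_le1) auto
  ultimately show ?thesis unfolding ex by simp
qed

lemma b_down_bound:
  assumes "valid (s, l, m)"
  shows "\<bar>b_down q l m\<bar> \<le> 1 / (1/q - q)"
proof -
  have v: "1/2 \<le> l" "- l \<le> m" "m \<le> l" using valid_tuple_bounds[OF assms] by auto
  have ex: "(m + 1) + (- ((l + m) + (l - m)) / 2) - (1 - 2*l) = l + m"
    by (simp add: field_simps)
  have "0 \<le> b_down q l m \<and>
      b_down q l m \<le> q powr ((m + 1) + (- ((l + m) + (l - m)) / 2) - (1 - 2*l)) / (1/q - q)"
    unfolding b_down_def using v
    by (intro powr_fraction_bound sqrt_qnum_mult_le qnum_ge inv_q_minus_q_pos) (auto simp: qnum_mult_nonneg)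
  moreover have "q powr (l + m) / (1/q - q) \<le> 1 / (1/q - q)"
    using v q_pos q_lt_1 inv_q_minus_q_pos by (intro divide_right_mono powr_le1) auto
  ultimately show ?thesis unfolding ex by simp
qed

lemma a_mid_bound:
  assumes "valid (s, l, m)"
  shows "\<bar>a_mid q l m\<bar> \<le> (1 + q\<^sup>2) / (1/q - q) * q powr (2*l - 1)"
proof -
  have v: "1/2 \<le> l" "- l \<le> m" "m \<le> l" using valid_tuple_bounds[OF assms] by auto
  define Y where "Y = q powr (m - 1/2) * sqrt (qnum q (l + m + 1) * qnum q (l - m))
                        / (qnum q (2*l) * qnum q (2*l + 2))"
  have ex: "(m - 1/2) + (- ((l + m + 1) + (l - m)) / 2) - (- (4 * l)) = 3 * l + m - 1"
    by (simp add: field_simps)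
  have "0 \<le> Y \<and> Y \<le> q powr ((m - 1/2) + (- ((l + m + 1) + (l - m)) / 2) - (- (4 * l))) / (1/q - q)"
    unfolding Y_def using v
    by (intro powr_fraction_bound sqrt_qnum_mult_le qnum_mult_qnum_ge inv_q_minus_q_pos) (auto simp: qnum_mult_nonneg)
  moreover have "q powr (3 * l + m - 1) / (1/q - q) \<le> q powr (2 * l - 1) / (1/q - q)"
    using v q_pos q_lt_1 inv_q_minus_q_pos by (intro divide_right_mono powr_mono') auto
  ultimately have "0 \<le> Y" "Y \<le> q powr (2 * l - 1) / (1/q - q)"
    unfolding ex by linarith+
  moreover have "a_mid q l m = (1 + q\<^sup>2) * Y"
    unfolding a_mid_def Y_def by simp
  ultimately show ?thesis
    using mult_left_mono[of Y "q powr (2 * l - 1) / (1/q - q)" "1 + q\<^sup>2"] by (simp add: abs_mult)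
qed

lemma b_mid_bound:
  assumes "valid (s, l, m)"
  shows "\<bar>b_mid q l m\<bar> \<le> (1 + q\<^sup>2) / (1/q - q)\<^sup>2 * q powr (2*l - 1)"
proof -
  have v: "1/2 \<le> l" "- l \<le> m" "m \<le> l" using valid_tuple_bounds[OF assms] by auto
  define W where "W = q powr (- (2 * l + 1)) / (1/q - q)\<^sup>2"
  define P1 where "P1 = qnum q (l - m + 1) * qnum q (l + m)"
  define P2 where "P2 = qnum q (l - m) * qnum q (l + m + 1)"
  have "0 \<le> P1" "0 \<le> P2"
    unfolding P1_def P2_def using v by (simp_all add: qnum_mult_nonneg)
  moreover have "P1 \<le> W" "P2 \<le> W"
    unfolding P1_def P2_def W_def
    using v qnum_mult_le[of "l - m + 1" "l + m"] qnum_mult_le[of "l - m" "l + m + 1"]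
    by (simp_all add: algebra_simps)
  moreover have "0 \<le> q\<^sup>2 * P2" "q\<^sup>2 * P2 \<le> q\<^sup>2 * W"
    using \<open>0 \<le> P2\<close> \<open>P2 \<le> W\<close> by (simp_all add: mult_left_mono)
  ultimately have "\<bar>P1 - q\<^sup>2 * P2\<bar> \<le> (1 + q\<^sup>2) * W"
    unfolding abs_le_iff distrib_right mult_1 by linarith
  moreover have D: "q powr (- (4 * l)) \<le> qnum q (2 * l) * qnum q (2 * l + 2)"
    using v(1) by (rule qnum_mult_qnum_ge)
  ultimately have "\<bar>b_mid q l m\<bar> \<le> (1 + q\<^sup>2) * W / q powr (- (4 * l))"
    unfolding b_mid_def P1_def P2_def abs_divide using q_pos
    by (intro frac_le) (auto simp: mult.assoc order.trans[OF _ D])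
  also have "\<dots> = (1 + q\<^sup>2) / (1/q - q)\<^sup>2 * (q powr (- (2 * l + 1)) / q powr (- (4 * l)))"
    unfolding W_def by simp
  also have "q powr (- (2 * l + 1)) / q powr (- (4 * l)) = q powr (2 * l - 1)"
    by (simp add: powr_diff[symmetric])
  finally show ?thesis .
qed

lemma eigenvalue_mult_bound:
  assumes "valid (s, l, m)" "\<bar>x\<bar> \<le> K * q powr (2 * l - 1)" "0 \<le> K"
  shows "(l + 1/2) * \<bar>x\<bar> \<le> K * (q powr (-2) / (- ln q))"
proof -
  have "1/2 \<le> l" using valid_tuple_bounds[OF assms(1)] by simp
  then have "(l + 1/2) * \<bar>x\<bar> \<le> K * ((l + 1/2) * q powr (2 * l - 1))"
    using mult_left_mono[OF assms(2), of "l + 1/2"] by (simp add: algebra_simps)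
  also have "\<dots> \<le> K * (q powr (-2) / (- ln q))"
    using eigenvalue_mult_powr_bounded[OF \<open>1/2 \<le> l\<close>] assms(3) by (rule mult_left_mono)
  finally show ?thesis .
qed

lemma lipschitz_banded_piA: "lipschitz_banded (piA q)"
  unfolding piA_sign_diagonal
proof (rule lipschitz_banded_sign_diagonal)
  show "\<bar>l' - l\<bar> \<le> 1 \<and> \<bar>m' - m\<bar> \<le> 1" if "a_common q l' m' l m \<noteq> 0" for l' m' l m
    using that unfolding a_common_def by (auto split: if_splits)
  show "l' = l \<and> \<bar>m' - m\<bar> \<le> 1" if "a_signed q l' m' l m \<noteq> 0" for l' m' l m
    using that unfolding a_signed_def by (auto split: if_splits)
  show "\<bar>a_common q l' m' l m\<bar> \<le> q powr (-1) / (1/q - q) + 1 / (1/q - q)"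
    if v: "valid (s', l', m')" "valid (s, l, m)" for s' l' m' s l m
  proof -
    have c: "0 \<le> q powr (-1) / (1/q - q)" "0 \<le> 1 / (1/q - q)"
      using inv_q_minus_q_pos by simp_all
    show ?thesis
    proof (cases "l' = l + 1 \<and> m' = m + 1")
      case True
      then have "a_common q l' m' l m = a_up q l m" by (simp add: a_common_def)
      then show ?thesis using a_up_bound[OF v(2)] c by linarith
    next
      case not_up: False
      show ?thesis
      proof (cases "l' = l - 1 \<and> m' = m + 1")
        case True
        then have "\<bar>a_common q l' m' l m\<bar> = \<bar>a_down q l m\<bar>" by (simp add: a_common_def)
        moreover have "valid (s, l - 1, m + 1)" using v(1) True valid_sign_cong by blast
        ultimately show ?thesis using a_down_bound[OF v(2)] c by linarith
      next
        case False
        with not_up have "a_common q l' m' l m = 0" by (auto simp: a_common_def)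
        then show ?thesis using c by simp
      qed
    qed
  qed
  show "(l + 1/2) * \<bar>a_signed q l' m' l m\<bar> \<le> (1 + q\<^sup>2) / (1/q - q) * (q powr (-2) / (- ln q))"
    if v: "valid (s', l', m')" "valid (s, l, m)" for s' l' m' s l m
    using a_mid_bound[OF v(2)] inv_q_minus_q_pos
    by (intro eigenvalue_mult_bound[OF v(2)]) (auto simp: a_signed_def)
qed

lemma lipschitz_banded_piB: "lipschitz_banded (piB q)"
  unfolding piB_sign_diagonal
proof (rule lipschitz_banded_sign_diagonal)
  show "\<bar>l' - l\<bar> \<le> 1 \<and> \<bar>m' - m\<bar> \<le> 1" if "b_common q l' m' l m \<noteq> 0" for l' m' l m
    using that unfolding b_common_def by (auto split: if_splits)
  show "l' = l \<and> \<bar>m' - m\<bar> \<le> 1" if "b_signed q l' m' l m \<noteq> 0" for l' m' l m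
    using that unfolding b_signed_def by (auto split: if_splits)
  show "\<bar>b_common q l' m' l m\<bar> \<le> 1 / (1/q - q)"
    if v: "valid (s', l', m')" "valid (s, l, m)" for s' l' m' s l m
    using b_up_bound[OF v(2)] b_down_bound[OF v(2)] inv_q_minus_q_pos unfolding b_common_def by auto
  show "(l + 1/2) * \<bar>b_signed q l' m' l m\<bar> \<le> (1 + q\<^sup>2) / (1/q - q)\<^sup>2 * (q powr (-2) / (- ln q))"
    if v: "valid (s', l', m')" "valid (s, l, m)" for s' l' m' s l m
    using b_mid_bound[OF v(2)] inv_q_minus_q_pos
    by (intro eigenvalue_mult_bound[OF v(2)]) (auto simp: b_signed_def)
qed

end

section \<open>Singular values of \<open>|D|\<^sup>-\<^sup>1\<close>\<close>

definition invabsD_above :: "real \<Rightarrow> idx set" where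
  "invabsD_above t = {i. valid i \<and> t < invabsD_diag i}"

definition sing_val_admissible :: "nat \<Rightarrow> real set" where
  "sing_val_admissible n = {t. 0 \<le> t \<and> finite (invabsD_above t) \<and> card (invabsD_above t) \<le> n}"

lemma sing_val_invabsD_eq: "sing_val_invabsD n = Inf (sing_val_admissible n)"
  unfolding sing_val_invabsD_def sing_val_admissible_def invabsD_above_def ..

lemma bdd_below_sing_val_admissible: "bdd_below (sing_val_admissible n)"
  unfolding sing_val_admissible_def by (rule bdd_belowI[of _ 0]) auto

text \<open>A basis vector \<open>|l, m\<rangle>\<^sub>\<plusminus>\<close> with \<open>l = a + 1/2\<close> and \<open>m = l - b\<close> is coded by \<open>(\<plusminus>, a, b)\<close>.\<close>
lemma invabsD_above_subset_codes:
  "invabsD_above (1 / (real K + 1)) \<subseteq>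
     (\<lambda>(s, a, b). (s, real a + 1/2, real a + 1/2 - real b)) ` (UNIV \<times> {0..<K} \<times> {0..<2*K})"
proof
  fix i assume "i \<in> invabsD_above (1 / (real K + 1))"
  then have vi: "valid i" and gt: "1 / (real K + 1) < invabsD_diag i"
    unfolding invabsD_above_def by auto
  obtain s l m where i: "i = (s, l, m)" by (cases i)
  obtain n :: nat and k :: int where n: "l = real n + 1/2" and k: "m = l - of_int k"
    and b: "- l \<le> m" "m \<le> l"
    using vi unfolding i valid_def by auto
  have "1 / (real K + 1) < 1 / (real n + 1)"
    using gt unfolding i invabsD_diag_def n by (simp add: add.assoc)
  then have "\<not> real K + 1 \<le> real n + 1"
    using frac_le[of 1 1 "real K + 1" "real n + 1"] by linarith
  then have "n < K" by simp
  moreover have "0 \<le> k" "k \<le> 2 * int n + 1" using b k n by linarith+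
  ultimately have "(s, n, nat k) \<in> UNIV \<times> {0..<K} \<times> {0..<2*K}" by simp
  moreover have "i = (\<lambda>(s, a, b). (s, real a + 1/2, real a + 1/2 - real b)) (s, n, nat k)"
    unfolding i using n k \<open>0 \<le> k\<close> by simp
  ultimately show "i \<in> (\<lambda>(s, a, b). (s, real a + 1/2, real a + 1/2 - real b)) ` (UNIV \<times> {0..<K} \<times> {0..<2*K})"
    by blast
qed

lemma inverse_mem_sing_val_admissible:
  assumes "4 * K\<^sup>2 \<le> n"
  shows "1 / (real K + 1) \<in> sing_val_admissible n"
proof -
  let ?B = "UNIV \<times> {0..<K} \<times> {0..<2*K} :: (bool \<times> nat \<times> nat) set"
  have "finite ?B" by simp
  note sub = invabsD_above_subset_codes[of K]
  then have "finite (invabsD_above (1 / (real K + 1)))"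
    using \<open>finite ?B\<close> finite_subset by blast
  moreover have "card (invabsD_above (1 / (real K + 1))) \<le> card ?B"
    using card_mono[OF finite_imageI[OF \<open>finite ?B\<close>] sub] card_image_le[OF \<open>finite ?B\<close>]
    by (rule le_trans)
  moreover have "card ?B = 4 * K\<^sup>2"
    by (simp add: card_cartesian_product power2_eq_square)
  ultimately show ?thesis
    unfolding sing_val_admissible_def using assms by simp
qed

lemma codes_subset_invabsD_above:
  assumes "\<And>a b. a < K \<Longrightarrow> b < K \<Longrightarrow> t < 1 / (real (a + b) + 1)"
  shows "(\<lambda>(s, a, b). (s, real (a + b) + 1/2, real a + 1/2)) ` (UNIV \<times> {0..<K} \<times> {0..<K})
      \<subseteq> invabsD_above t"
proof
  fix i :: idx
  assume "i \<in> (\<lambda>(s, a, b). (s, real (a + b) + 1/2, real a + 1/2)) ` (UNIV \<times> {0..<K} \<times> {0..<K})"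
  then obtain s a b where ab: "a < K" "b < K" and i: "i = (s, real (a + b) + 1/2, real a + 1/2)"
    by auto
  have "valid i"
    unfolding i valid_iff by (auto intro: exI[of _ "a + b"] exI[of _ "int b"])
  moreover have "t < invabsD_diag i"
    using assms[OF ab] unfolding i invabsD_diag_def by (simp add: add.assoc)
  ultimately show "i \<in> invabsD_above t" unfolding invabsD_above_def by simp
qed

lemma sing_val_admissible_ge:
  assumes "1 \<le> n" "t \<in> sing_val_admissible n"
  shows "1 / (4 * sqrt n) \<le> t"
proof (rule ccontr)
  assume "\<not> 1 / (4 * sqrt n) \<le> t"
  then have t: "t < 1 / (4 * sqrt n)" by simp
  have "1 \<le> sqrt n" using assms(1) by simp
  define K where "K = nat \<lceil>sqrt n\<rceil>"
  have K: "sqrt n \<le> real K" "real K \<le> sqrt n + 1"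
    unfolding K_def using \<open>1 \<le> sqrt n\<close> by linarith+
  have "t < 1 / (real (a + b) + 1)" if "a < K" "b < K" for a b
  proof -
    have "real (a + b) + 1 < 4 * sqrt n" using that K \<open>1 \<le> sqrt n\<close> by linarith
    then have "1 / (4 * sqrt n) < 1 / (real (a + b) + 1)"
      by (intro frac_less2) auto
    then show ?thesis using t by linarith
  qed
  note sub = codes_subset_invabsD_above[of K t, OF this]
  let ?B = "UNIV \<times> {0..<K} \<times> {0..<K} :: (bool \<times> nat \<times> nat) set"
  have inj: "inj_on (\<lambda>(s, a, b). (s, real (a + b) + 1/2, real a + 1/2)) ?B"
    by (rule inj_onI) auto
  have "finite (invabsD_above t)" "card (invabsD_above t) \<le> n"
    using assms(2) unfolding sing_val_admissible_def by auto
  have "card ?B \<le> card (invabsD_above t)"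
    using card_mono[OF \<open>finite (invabsD_above t)\<close> sub] card_image[OF inj] by simp
  moreover have "card ?B = 2 * (K * K)"
    by (simp add: card_cartesian_product)
  moreover have "n \<le> K * K"
  proof -
    have "sqrt n * sqrt n \<le> real K * real K" using K \<open>1 \<le> sqrt n\<close> by (intro mult_mono) auto
    then show ?thesis by (simp flip: of_nat_mult)
  qed
  ultimately show False
    using assms(1) \<open>card (invabsD_above t) \<le> n\<close> by linarith
qed

lemma sing_val_admissible_nonempty: "sing_val_admissible n \<noteq> {}"
  using inverse_mem_sing_val_admissible[of 0 n] by auto

lemma sing_val_invabsD_ge: "1 \<le> n \<Longrightarrow> 1 / (4 * sqrt n) \<le> sing_val_invabsD n"
  unfolding sing_val_invabsD_eq
  by (intro cInf_greatest sing_val_admissible_nonempty) (rule sing_val_admissible_ge)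

lemma sing_val_invabsD_nonneg: "0 \<le> sing_val_invabsD n"
  unfolding sing_val_invabsD_eq
  by (intro cInf_greatest sing_val_admissible_nonempty) (simp add: sing_val_admissible_def)

lemma sing_val_invabsD_le:
  assumes "1 \<le> n"
  shows "sing_val_invabsD n \<le> 2 / sqrt n"
proof -
  define K where "K = nat \<lfloor>sqrt n / 2\<rfloor>"
  have K: "real K \<le> sqrt n / 2" "sqrt n / 2 < real K + 1"
    unfolding K_def by (simp add: floor_le_iff, linarith) linarith
  have "real (4 * K\<^sup>2) \<le> real n"
    using mult_mono[OF K(1) K(1)] by (simp add: power2_eq_square)
  then have "1 / (real K + 1) \<in> sing_val_admissible n"
    by (intro inverse_mem_sing_val_admissible) linarith
  then have "sing_val_invabsD n \<le> 1 / (real K + 1)"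
    unfolding sing_val_invabsD_eq by (rule cInf_lower[OF _ bdd_below_sing_val_admissible])
  also have "\<dots> \<le> 2 / sqrt n"
    using K assms by (simp add: field_simps)
  finally show ?thesis .
qed

lemma sing_val_invabsD_tendsto_0: "sing_val_invabsD \<longlonglongrightarrow> 0"
proof (rule tendsto_sandwich[of "\<lambda>_. 0" _ _ "\<lambda>n. 2 / sqrt (real n)"])
  show "\<forall>\<^sub>F n in sequentially. 0 \<le> sing_val_invabsD n"
    by (simp add: sing_val_invabsD_nonneg)
  show "\<forall>\<^sub>F n in sequentially. sing_val_invabsD n \<le> 2 / sqrt (real n)"
    using eventually_ge_at_top[of 1] by eventually_elim (rule sing_val_invabsD_le)
  have "filterlim (\<lambda>n. sqrt (real n)) at_top sequentially"
    by (rule filterlim_compose[OF sqrt_at_top filterlim_real_sequentially])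
  then show "(\<lambda>n. 2 / sqrt (real n)) \<longlonglongrightarrow> 0"
    by (intro tendsto_divide_0[OF tendsto_const] filterlim_at_top_imp_at_infinity)
qed simp

lemma metric_dimension_2: "metric_dimension 2"
proof -
  have "1/4 * real n powr (- 1 / 2) \<le> sing_val_invabsD n \<and> sing_val_invabsD n \<le> 2 * real n powr (- 1 / 2)"
    if "1 \<le> n" for n
  proof -
    have "real n powr (- 1 / 2) = 1 / sqrt n"
      using that by (simp add: powr_minus_divide powr_half_sqrt flip: minus_divide_left)
    then show ?thesis
      using sing_val_invabsD_ge[OF that] sing_val_invabsD_le[OF that] by simp
  qed
  then show ?thesis
    unfolding metric_dimension_def by (intro exI[of _ "1/4"] exI[of _ 2]) auto
qed

lemma lipschitz_banded_piAlg:
  assumes "0 < q" "q < 1" "T \<in> piAlg q"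
  shows "lipschitz_banded T"
proof -
  have "lipschitz_banded S" if "S \<in> {piA q, madj (piA q), piB q}" for S
    using that lipschitz_banded_piA[OF assms(1,2)] lipschitz_banded_piB[OF assms(1,2)]
      lipschitz_banded_madj[OF lipschitz_banded_piA[OF assms(1,2)]]
    by blast
  then show ?thesis
    using assms(3) unfolding piAlg_def by (rule alg_gen_lipschitz_banded[rotated])
qed

lemma banded_bounded_generators:
  assumes "0 < q" "q < 1" "T \<in> piAlg q \<union> commD q"
  shows "banded_bounded T"
  using assms(3) lipschitz_banded_piAlg[OF assms(1,2)]
  unfolding commD_def lipschitz_banded_def by blast

theorem mainTheorem7:
  fixes q :: real
  assumes "0 < q" and "q < 1"
  shows "(\<forall>T \<in> Balg q. mbounded T) \<and> spectral_triple q \<and> regular q \<and> metric_dimension 2"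
proof (intro conjI ballI)
  fix T assume "T \<in> Balg q"
  then have "T \<in> alg_gen ((piAlg q \<union> commD q) \<union> madj ` (piAlg q \<union> commD q))"
    unfolding Balg_def star_alg_gen_def .
  then have "banded_bounded T"
    by (rule alg_gen_banded_bounded)
       (use banded_bounded_generators[OF assms] banded_bounded_madj in blast)
  then show "mbounded T"
    by (rule banded_bounded_imp_mbounded)
next
  show "spectral_triple q"
    unfolding spectral_triple_def
    using lipschitz_banded_piAlg[OF assms] hermitian_Dmat sing_val_invabsD_tendsto_0
      banded_bounded_imp_mbounded
    unfolding lipschitz_banded_def by blast
  show "regular q"
    unfolding regular_def in_dom_delta_pow_def
    using banded_bounded_generators[OF assms] banded_bounded_delta_pow banded_bounded_imp_mbounded
    by blast
  show "metric_dimension 2"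
    by (rule metric_dimension_2)
qed

end
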